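(* Let $n\ge1$ and $P=\Phi^+(A_n)=\{(i,j)\colon1\le i,j\le n,\ i+j\ge n+1\}$. For $1\le i\le n$ let $\overline{R}_i\coloneqq\sum_{j'\ge n+1-i}T^-_{(i,j')}+\sum_{i'\ge i}T^-_{(i',n+1-i)}$ (sums over elements of $P$). Then \[\tfrac12\big(\overline{R}_1-\overline{R}_2+\overline{R}_3-\cdots+(-1)^{n-1}\overline{R}_n\big)\equiv^q\begin{cases}0&\text{if $n$ is even},\\ \frac{1}{q+1}&\text{if $n$ is odd}.\end{cases}\]
   Context: $P$ is ordered by $(i,j)\le(i',j')$ iff $i\le i'$ and $j\le j'$. $\mathcal{J}(P)$ is the set of order ideals. For $p\in P$, $I\in\mathcal{J}(P)$: $T_p^+(I)=1$ if $p$ is minimal in $P\setminus I$, else $0$; $T_p^-(I)=1$ if $p$ is maximal in $I$, else $0$; $T_p^q=T_p^+-qT_p^-$ with $q$ an indeterminate. For $f,g\colon\mathcal{J}(P)\to\mathbb{R}(q)$, $f\equiv^q g$ means $f-g=\sum_{p\in P}c_p(q)T_p^q$ for some $c_p(q)\in\mathbb{R}(q)$; an element of $\mathbb{R}(q)$ denotes a constant function. *)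

theory Defs
  imports "HOL-Computational_Algebra.Polynomial" "HOL-Computational_Algebra.Fraction_Field"
begin

type_synonym ratfun = "real poly fract"

definition qv :: ratfun where "qv = Fract [:0, 1:] 1"

definition ple :: "nat \<times> nat \<Rightarrow> nat \<times> nat \<Rightarrow> bool" where
  "ple p p' \<longleftrightarrow> fst p \<le> fst p' \<and> snd p \<le> snd p'"

definition posP :: "nat \<Rightarrow> (nat \<times> nat) set" where
  "posP n = {(i, j). 1 \<le> i \<and> i \<le> n \<and> 1 \<le> j \<and> j \<le> n \<and> n + 1 \<le> i + j}"

definition order_ideals :: "(nat \<times> nat) set \<Rightarrow> (nat \<times> nat) set set" where
  "order_ideals P = {I. I \<subseteq> P \<and> (\<forall>x\<in>I. \<forall>y\<in>P. ple y x \<longrightarrow> y \<in> I)}"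

definition Tplus :: "(nat \<times> nat) set \<Rightarrow> nat \<times> nat \<Rightarrow> (nat \<times> nat) set \<Rightarrow> ratfun" where
  "Tplus P p I = (if p \<in> P - I \<and> (\<forall>y\<in>P - I. ple y p \<longrightarrow> y = p) then 1 else 0)"

definition Tminus :: "(nat \<times> nat) set \<Rightarrow> nat \<times> nat \<Rightarrow> (nat \<times> nat) set \<Rightarrow> ratfun" where
  "Tminus P p I = (if p \<in> I \<and> (\<forall>y\<in>I. ple p y \<longrightarrow> y = p) then 1 else 0)"

definition Tq :: "(nat \<times> nat) set \<Rightarrow> nat \<times> nat \<Rightarrow> (nat \<times> nat) set \<Rightarrow> ratfun" where
  "Tq P p I = Tplus P p I - qv * Tminus P p I"

definition qequiv :: "(nat \<times> nat) set \<Rightarrow> ((nat \<times> nat) set \<Rightarrow> ratfun) \<Rightarrow> ((nat \<times> nat) set \<Rightarrow> ratfun) \<Rightarrow> bool" where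
  "qequiv P f g \<longleftrightarrow> (\<exists>c :: nat \<times> nat \<Rightarrow> ratfun.
      \<forall>I \<in> order_ideals P. f I - g I = (\<Sum>p\<in>P. c p * Tq P p I))"

definition Rbar :: "nat \<Rightarrow> nat \<Rightarrow> (nat \<times> nat) set \<Rightarrow> ratfun" where
  "Rbar n i I =
     (\<Sum>j' \<in> {j'. (i, j') \<in> posP n \<and> n + 1 - i \<le> j'}. Tminus (posP n) (i, j') I)
   + (\<Sum>i' \<in> {i'. (i', n + 1 - i) \<in> posP n \<and> i \<le> i'}. Tminus (posP n) (i', n + 1 - i) I)"

end

theory Submission
  imports Defs
begin

text \<open>
  An order ideal \<open>I\<close> of \<open>\<Phi>\<^sup>+(A\<^sub>n)\<close> is determined by its row lengths \<open>a\<^sub>i\<close>, row \<open>i\<close>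
  consisting of the cells with \<open>n < i + j \<le> n + a\<^sub>i\<close>; they satisfy \<open>a\<^sub>i \<le> i\<close> and
  \<open>a\<^sub>i\<^sub>+\<^sub>1 \<le> a\<^sub>i + 1\<close>. The hooks \<open>R\<^sub>i\<close> consist of row \<open>i\<close> and column \<open>n + 1 - i\<close>, so in the
  alternating sum of the \<open>R\<^sub>i\<close> the cell \<open>(i, j)\<close> gets the weight \<open>(-1)\<^sup>i\<^sup>-\<^sup>1 + (-1)\<^sup>n\<^sup>-\<^sup>j\<close>,
  which is \<open>2 w\<^sub>i\<^sub>j\<close> with \<open>w\<^sub>i\<^sub>j = (-1)\<^sup>i\<^sup>-\<^sup>1\<close> if \<open>i + j + n\<close> is odd and \<open>w\<^sub>i\<^sub>j = 0\<close> otherwise.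
  Let \<open>A = \<Sum> w\<^sub>p T\<^sup>-\<^sub>p\<close> and \<open>B = \<Sum> w\<^sub>p T\<^sup>+\<^sub>p\<close>. In row \<open>i\<close> only the last cell of \<open>I\<close> and the
  first cell outside \<open>I\<close> can contribute, and comparing parities shows that the row
  contributes \<open>(-1)\<^sup>i\<^sup>-\<^sup>1 (1 - h\<^sub>i - h\<^sub>i\<^sub>-\<^sub>1)\<close> to \<open>A + B\<close>, where \<open>h\<^sub>i = 1\<close> iff
  \<open>a\<^sub>i\<close> is odd and \<open>a\<^sub>i\<^sub>+\<^sub>1 = a\<^sub>i + 1\<close>. The alternating sum telescopes to \<open>A + B = [n odd]\<close>,
  hence \<open>A - [n odd]/(q + 1) = (q A - B)/(q + 1) = -\<Sum> w\<^sub>p T\<^sup>q\<^sub>p/(q + 1)\<close>.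
\<close>

subsection \<open>Order ideals of convex subsets of the grid\<close>

definition ple_convex :: "(nat \<times> nat) set \<Rightarrow> bool" where
  "ple_convex P \<longleftrightarrow> (\<forall>x\<in>P. \<forall>z\<in>P. \<forall>y. ple x y \<and> ple y z \<longrightarrow> y \<in> P)"

lemma order_ideals_subset: "I \<in> order_ideals P \<Longrightarrow> I \<subseteq> P"
  by (simp add: order_ideals_def)

lemma order_ideals_downward:
  "I \<in> order_ideals P \<Longrightarrow> y \<in> I \<Longrightarrow> x \<in> P \<Longrightarrow> ple x y \<Longrightarrow> x \<in> I"
  by (auto simp: order_ideals_def)

lemma order_ideals_convex_mem:
  assumes "ple_convex P" "I \<in> order_ideals P" "x \<in> P" "y \<in> I" "ple x z" "ple z y"
  shows "z \<in> I"
proof -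
  have "z \<in> P"
    using assms order_ideals_subset unfolding ple_convex_def by blast
  then show ?thesis by (rule order_ideals_downward[OF assms(2,4) _ assms(6)])
qed

lemma Tminus_ple_convex:
  assumes P: "ple_convex P" and I: "I \<in> order_ideals P"
  shows "Tminus P (i, j) I = of_bool ((i, j) \<in> I \<and> (i, Suc j) \<notin> I \<and> (Suc i, j) \<notin> I)"
proof -
  have "(\<forall>y\<in>I. ple (i, j) y \<longrightarrow> y = (i, j)) \<longleftrightarrow> (i, Suc j) \<notin> I \<and> (Suc i, j) \<notin> I"
    if ij: "(i, j) \<in> I"
  proof
    assume "\<forall>y\<in>I. ple (i, j) y \<longrightarrow> y = (i, j)"
    then show "(i, Suc j) \<notin> I \<and> (Suc i, j) \<notin> I" by (auto simp: ple_def)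
  next
    assume no_cover: "(i, Suc j) \<notin> I \<and> (Suc i, j) \<notin> I"
    have "(i, j) \<in> P" using ij order_ideals_subset[OF I] by blast
    note between = order_ideals_convex_mem[OF P I this]
    show "\<forall>y\<in>I. ple (i, j) y \<longrightarrow> y = (i, j)"
    proof (intro ballI impI)
      fix y assume y: "y \<in> I" "ple (i, j) y"
      show "y = (i, j)"
      proof (rule ccontr)
        assume "y \<noteq> (i, j)"
        then have "ple (i, Suc j) y \<or> ple (Suc i, j) y"
          using y(2) by (cases y) (auto simp: ple_def)
        then show False
          using between[OF y(1)] no_cover by (auto simp: ple_def)
      qed
    qed
  qed
  then show ?thesis by (auto simp: Tminus_def)
qed

lemma Tplus_ple_convex:
  assumes P: "ple_convex P" and I: "I \<in> order_ideals P"
  shows "Tplus P (i, j) I = of_bool ((i, j) \<in> P - I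
           \<and> (0 < j \<longrightarrow> (i, j - 1) \<notin> P - I) \<and> (0 < i \<longrightarrow> (i - 1, j) \<notin> P - I))"
proof -
  have "(\<forall>y\<in>P - I. ple y (i, j) \<longrightarrow> y = (i, j)) \<longleftrightarrow>
          (0 < j \<longrightarrow> (i, j - 1) \<notin> P - I) \<and> (0 < i \<longrightarrow> (i - 1, j) \<notin> P - I)"
    if ij: "(i, j) \<in> P - I"
  proof
    assume "\<forall>y\<in>P - I. ple y (i, j) \<longrightarrow> y = (i, j)"
    then have "(i', j') \<notin> P - I" if "ple (i', j') (i, j)" "(i', j') \<noteq> (i, j)" for i' j'
      using that by blast
    then show "(0 < j \<longrightarrow> (i, j - 1) \<notin> P - I) \<and> (0 < i \<longrightarrow> (i - 1, j) \<notin> P - I)"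
      by (simp add: ple_def)
  next
    assume no_cover: "(0 < j \<longrightarrow> (i, j - 1) \<notin> P - I) \<and> (0 < i \<longrightarrow> (i - 1, j) \<notin> P - I)"
    show "\<forall>y\<in>P - I. ple y (i, j) \<longrightarrow> y = (i, j)"
    proof (intro ballI impI)
      fix y assume y: "y \<in> P - I" "ple y (i, j)"
      show "y = (i, j)"
      proof (rule ccontr)
        assume "y \<noteq> (i, j)"
        then obtain z where "z = (i, j - 1) \<and> 0 < j \<or> z = (i - 1, j) \<and> 0 < i" "ple y z" "ple z (i, j)"
          using y(2) by (cases y) (force simp: ple_def)
        moreover have "z \<in> P"
          using calculation P ij y(1) unfolding ple_convex_def by blast
        ultimately have "z \<in> I" using no_cover by blast
        then show False using order_ideals_downward[OF I] y \<open>ple y z\<close> by blast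
      qed
    qed
  qed
  then show ?thesis by (auto simp: Tplus_def)
qed

subsection \<open>Row lengths of an order ideal of \<open>\<Phi>\<^sup>+(A\<^sub>n)\<close>\<close>

lemma mem_posP_iff: "(i, j) \<in> posP n \<longleftrightarrow> 0 < i \<and> i \<le> n \<and> j \<le> n \<and> n < i + j"
  by (auto simp: posP_def)

lemma ple_convex_posP: "ple_convex (posP n)"
  by (auto simp: ple_convex_def posP_def ple_def)

lemma finite_interval_closed_eq_atLeastLessThan:
  fixes S :: "nat set"
  assumes "finite S" "S \<subseteq> {L..}" "\<And>x y. x \<in> S \<Longrightarrow> L \<le> y \<Longrightarrow> y \<le> x \<Longrightarrow> y \<in> S"
  shows "S = {L..<L + card S}"
proof (cases "S = {}")
  case False
  define M where "M = Max S"
  have max: "M \<in> S" using False assms(1) by (simp add: M_def)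
  have "S = {L..M}"
  proof
    show "S \<subseteq> {L..M}" using assms(1,2) by (auto simp: M_def)
    show "{L..M} \<subseteq> S" using max assms(3) by auto
  qed
  moreover have "L \<le> M" using max assms(2) by auto
  ultimately show ?thesis by (simp add: atLeastLessThanSuc_atLeastAtMost)
qed simp

definition row_len :: "(nat \<times> nat) set \<Rightarrow> nat \<Rightarrow> nat" where
  "row_len I i = card {j. (i, j) \<in> I}"

lemma row_len_le:
  assumes "I \<in> order_ideals (posP n)"
  shows "row_len I i \<le> i"
proof -
  have "{j. (i, j) \<in> I} \<subseteq> {n + 1 - i..n}"
    using order_ideals_subset[OF assms] by (auto simp: posP_def)
  then have "row_len I i \<le> card {n + 1 - i..n}"
    unfolding row_len_def by (rule card_mono[rotated]) simp
  then show ?thesis by simp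
qed

lemma row_len_eq_0:
  assumes "I \<in> order_ideals (posP n)" "i = 0 \<or> n < i"
  shows "row_len I i = 0"
proof -
  have "{j. (i, j) \<in> I} = {}"
    using order_ideals_subset[OF assms(1)] assms(2) by (auto simp: posP_def)
  then show ?thesis by (simp add: row_len_def)
qed

lemma mem_ideal_posP_iff:
  assumes I: "I \<in> order_ideals (posP n)"
  shows "(i, j) \<in> I \<longleftrightarrow> 0 < i \<and> i \<le> n \<and> n < i + j \<and> i + j \<le> n + row_len I i"
proof -
  define S where "S = {j. (i, j) \<in> I}"
  have S_sub: "S \<subseteq> {n + 1 - i..n}"
    using order_ideals_subset[OF I] by (auto simp: S_def posP_def)
  have eq: "S = {n + 1 - i..<n + 1 - i + card S}"
  proof (rule finite_interval_closed_eq_atLeastLessThan)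
    show "finite S" using S_sub finite_subset by blast
    show "S \<subseteq> {n + 1 - i..}" using S_sub by auto
  next
    fix x y assume x: "x \<in> S" and y: "n + 1 - i \<le> y" "y \<le> x"
    have "(i, x) \<in> posP n" using x order_ideals_subset[OF I] by (auto simp: S_def)
    then have "(i, y) \<in> posP n" using y by (auto simp: posP_def)
    moreover have "ple (i, y) (i, x)" using y by (simp add: ple_def)
    ultimately show "y \<in> S" using order_ideals_downward[OF I] x by (auto simp: S_def)
  qed
  show ?thesis
  proof (cases "0 < i \<and> i \<le> n")
    case True
    have "(i, j) \<in> I \<longleftrightarrow> j \<in> S" by (simp add: S_def)
    also have "\<dots> \<longleftrightarrow> j \<in> {n + 1 - i..<n + 1 - i + row_len I i}"
      by (subst eq) (simp add: row_len_def S_def)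
    finally show ?thesis using True by auto
  next
    case False
    then show ?thesis using order_ideals_subset[OF I] by (auto simp: posP_def)
  qed
qed

lemma row_len_Suc_le:
  assumes I: "I \<in> order_ideals (posP n)"
  shows "row_len I (Suc i) \<le> row_len I i + 1"
proof (rule ccontr)
  assume long: "\<not> ?thesis"
  have "0 < i" using long row_len_le[OF I, of "Suc i"] by simp
  moreover have "Suc i \<le> n"
    using long row_len_eq_0[OF I, of "Suc i"] by (cases "Suc i \<le> n") auto
  moreover define j where "j = n + row_len I (Suc i) - Suc i"
  ultimately have "(Suc i, j) \<in> I" "(i, j) \<in> posP n"
    using long row_len_le[OF I, of "Suc i"] by (auto simp: mem_ideal_posP_iff[OF I] posP_def)
  then have "(i, j) \<in> I"
    using order_ideals_downward[OF I] by (auto simp: ple_def)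
  then show False using long by (auto simp: mem_ideal_posP_iff[OF I] j_def)
qed

lemma Tminus_posP:
  assumes I: "I \<in> order_ideals (posP n)" and p: "(i, j) \<in> posP n"
  shows "Tminus (posP n) (i, j) I =
    of_bool (0 < row_len I i \<and> i + j = n + row_len I i \<and> row_len I (Suc i) \<le> row_len I i)"
  using p row_len_eq_0[OF I, of "Suc i"]
  by (cases "Suc i \<le> n") (auto simp: Tminus_ple_convex[OF ple_convex_posP I] mem_ideal_posP_iff[OF I] mem_posP_iff)

lemma Tplus_posP:
  assumes I: "I \<in> order_ideals (posP n)" and p: "(i, j) \<in> posP n"
  shows "Tplus (posP n) (i, j) I =
    of_bool (i + j = n + 1 + row_len I i \<and> (row_len I i = 0 \<or> row_len I i \<le> row_len I (i - 1)))"
  using p row_len_eq_0[OF I, of 0] row_len_le[OF I, of i]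
  by (auto simp: Tplus_ple_convex[OF ple_convex_posP I] mem_ideal_posP_iff[OF I] mem_posP_iff)

subsection \<open>The alternating hook sum\<close>

definition checker_sign :: "nat \<Rightarrow> nat \<times> nat \<Rightarrow> 'a::comm_ring_1" where
  "checker_sign n p = (if odd (fst p + snd p + n) then (-1) ^ (fst p - 1) else 0)"

lemma sum_posP_rows: "(\<Sum>p\<in>posP n. f p) = (\<Sum>i=1..n. \<Sum>j=n + 1 - i..n. f (i, j))"
proof -
  have "posP n = Sigma {1..n} (\<lambda>i. {n + 1 - i..n})" by (auto simp: posP_def)
  then show ?thesis by (simp add: sum.Sigma)
qed

lemma sum_posP_columns: "(\<Sum>p\<in>posP n. f p) = (\<Sum>i=1..n. \<Sum>i'=i..n. f (i', n + 1 - i))"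
proof -
  have "(\<Sum>p\<in>posP n. f p) = (\<Sum>(i, i')\<in>Sigma {1..n} (\<lambda>i. {i..n}). f (i', n + 1 - i))"
    by (rule sum.reindex_bij_witness[where i = "\<lambda>(i, i'). (i', n + 1 - i)"
          and j = "\<lambda>(i', j). (n + 1 - j, i')"]) (auto simp: posP_def)
  then show ?thesis by (simp add: sum.Sigma)
qed

lemma minus_one_power_add_eq_checker_sign:
  assumes "0 < i" "j \<le> n"
  shows "(-1) ^ (i - 1) + (-1) ^ (n - j) = (2 * checker_sign n (i, j) :: 'a::comm_ring_1)"
proof (cases "odd (i + j + n)")
  case True
  then have "even (n - j) \<longleftrightarrow> even (i - 1)" using assms by presburger
  then show ?thesis using True by (simp add: checker_sign_def minus_one_power_iff)
next
  case False
  then have "even (n - j) \<longleftrightarrow> odd (i - 1)" using assms by presburger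
  then show ?thesis using False by (simp add: checker_sign_def minus_one_power_iff)
qed

lemma alternating_hook_sum:
  fixes f :: "nat \<times> nat \<Rightarrow> 'a::comm_ring_1"
  shows "(\<Sum>i=1..n. (-1) ^ (i - 1) * ((\<Sum>j=n + 1 - i..n. f (i, j)) + (\<Sum>i'=i..n. f (i', n + 1 - i))))
       = 2 * (\<Sum>p\<in>posP n. checker_sign n p * f p)"
proof -
  have rows: "(\<Sum>i=1..n. (-1) ^ (i - 1) * (\<Sum>j=n + 1 - i..n. f (i, j)))
      = (\<Sum>p\<in>posP n. (-1) ^ (fst p - 1) * f p)"
    by (simp add: sum_posP_rows sum_distrib_left)
  have "(\<Sum>i=1..n. (-1) ^ (i - 1) * (\<Sum>i'=i..n. f (i', n + 1 - i)))
      = (\<Sum>i=1..n. \<Sum>i'=i..n. (-1) ^ (n - (n + 1 - i)) * f (i', n + 1 - i))"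
    by (intro sum.cong refl) (simp add: sum_distrib_left)
  also have "\<dots> = (\<Sum>p\<in>posP n. (-1) ^ (n - snd p) * f p)"
    using sum_posP_columns[of "\<lambda>p. (-1) ^ (n - snd p) * f p" n] by simp
  finally have columns: "(\<Sum>i=1..n. (-1) ^ (i - 1) * (\<Sum>i'=i..n. f (i', n + 1 - i)))
      = (\<Sum>p\<in>posP n. (-1) ^ (n - snd p) * f p)" .
  have "(\<Sum>i=1..n. (-1) ^ (i - 1) * ((\<Sum>j=n + 1 - i..n. f (i, j)) + (\<Sum>i'=i..n. f (i', n + 1 - i))))
      = (\<Sum>p\<in>posP n. (-1) ^ (fst p - 1) * f p + (-1) ^ (n - snd p) * f p)"
    by (simp only: distrib_left sum.distrib rows columns)
  also have "\<dots> = (\<Sum>p\<in>posP n. 2 * checker_sign n p * f p)"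
  proof (intro sum.cong refl)
    fix p assume "p \<in> posP n"
    then obtain i j where "p = (i, j)" "0 < i" "j \<le> n" by (cases p) (auto simp: mem_posP_iff)
    then show "(-1) ^ (fst p - 1) * f p + (-1) ^ (n - snd p) * f p = 2 * checker_sign n p * f p"
      by (simp flip: distrib_right minus_one_power_add_eq_checker_sign)
  qed
  finally show ?thesis by (simp add: sum_distrib_left mult.assoc)
qed

lemma alternating_sum_Rbar:
  "(\<Sum>i=1..n. (-1) ^ (i - 1) * Rbar n i I)
     = 2 * (\<Sum>p\<in>posP n. checker_sign n p * Tminus (posP n) p I)"
proof -
  have "Rbar n i I = (\<Sum>j=n + 1 - i..n. Tminus (posP n) (i, j) I)
                   + (\<Sum>i'=i..n. Tminus (posP n) (i', n + 1 - i) I)" if "i \<in> {1..n}" for i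
  proof -
    have "{j'. (i, j') \<in> posP n \<and> n + 1 - i \<le> j'} = {n + 1 - i..n}"
         "{i'. (i', n + 1 - i) \<in> posP n \<and> i \<le> i'} = {i..n}"
      using that by (auto simp: posP_def)
    then show ?thesis by (simp add: Rbar_def)
  qed
  then show ?thesis
    by (simp add: alternating_hook_sum[symmetric])
qed

subsection \<open>The boundary of an order ideal, row by row\<close>

lemma row_sum_Tminus_posP:
  assumes I: "I \<in> order_ideals (posP n)" and i: "0 < i" "i \<le> n"
  shows "(\<Sum>j=n + 1 - i..n. of_bool (odd (i + j + n)) * Tminus (posP n) (i, j) I)
       = of_bool (row_len I (Suc i) \<le> row_len I i \<and> odd (row_len I i))"
proof -
  let ?a = "row_len I i"
  have "(\<Sum>j=n + 1 - i..n. of_bool (odd (i + j + n)) * Tminus (posP n) (i, j) I)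
      = (\<Sum>j=n + 1 - i..n. if j = n + ?a - i
           then of_bool (0 < ?a \<and> row_len I (Suc i) \<le> ?a \<and> odd ?a) else 0)"
  proof (intro sum.cong refl)
    fix j assume "j \<in> {n + 1 - i..n}"
    then have "(i, j) \<in> posP n" using i by (auto simp: posP_def)
    moreover have "i + j = n + ?a \<longleftrightarrow> j = n + ?a - i" using i by auto
    ultimately show "of_bool (odd (i + j + n)) * Tminus (posP n) (i, j) I
        = (if j = n + ?a - i then of_bool (0 < ?a \<and> row_len I (Suc i) \<le> ?a \<and> odd ?a) else 0)"
      by (auto simp: Tminus_posP[OF I])
  qed
  also have "\<dots> = of_bool (row_len I (Suc i) \<le> ?a \<and> odd ?a)"
    using i row_len_le[OF I, of i] odd_pos[of ?a] by auto
  finally show ?thesis .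
qed

lemma row_sum_Tplus_posP:
  assumes I: "I \<in> order_ideals (posP n)" and i: "0 < i" "i \<le> n"
  shows "(\<Sum>j=n + 1 - i..n. of_bool (odd (i + j + n)) * Tplus (posP n) (i, j) I)
       = of_bool (row_len I i < i \<and> (row_len I i = 0 \<or> row_len I i \<le> row_len I (i - 1))
                  \<and> even (row_len I i))"
proof -
  let ?a = "row_len I i"
  have "(\<Sum>j=n + 1 - i..n. of_bool (odd (i + j + n)) * Tplus (posP n) (i, j) I)
      = (\<Sum>j=n + 1 - i..n. if j = n + 1 + ?a - i
           then of_bool ((?a = 0 \<or> ?a \<le> row_len I (i - 1)) \<and> even ?a) else 0)"
  proof (intro sum.cong refl)
    fix j assume "j \<in> {n + 1 - i..n}"
    then have "(i, j) \<in> posP n" using i by (auto simp: posP_def)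
    moreover have "i + j = n + 1 + ?a \<longleftrightarrow> j = n + 1 + ?a - i" using i by auto
    ultimately show "of_bool (odd (i + j + n)) * Tplus (posP n) (i, j) I
        = (if j = n + 1 + ?a - i then of_bool ((?a = 0 \<or> ?a \<le> row_len I (i - 1)) \<and> even ?a) else 0)"
      by (auto simp: Tplus_posP[OF I])
  qed
  also have "\<dots> = of_bool (?a < i \<and> (?a = 0 \<or> ?a \<le> row_len I (i - 1)) \<and> even ?a)"
    using i row_len_le[OF I, of i] by auto
  finally show ?thesis .
qed

lemma row_boundary_indicators:
  fixes a b c i :: nat
  assumes "a \<le> i" "b < i" "a \<le> b + 1" "c \<le> a + 1"
  shows "of_bool (c \<le> a \<and> odd a) + of_bool (a < i \<and> (a = 0 \<or> a \<le> b) \<and> even a)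
       = (1 - of_bool (odd a \<and> c = a + 1) - of_bool (odd b \<and> a = b + 1) :: 'r::ring_1)"
proof (cases "odd a")
  case True
  then show ?thesis using assms by (cases "c = a + 1") auto
next
  case False
  then show ?thesis using assms by (cases "a = b + 1") auto
qed

definition odd_rise :: "(nat \<times> nat) set \<Rightarrow> nat \<Rightarrow> 'a::comm_ring_1" where
  "odd_rise I i = of_bool (odd (row_len I i) \<and> row_len I (Suc i) = row_len I i + 1)"

lemma row_sum_boundary_posP:
  assumes I: "I \<in> order_ideals (posP n)" and i: "0 < i" "i \<le> n"
  shows "(\<Sum>j=n + 1 - i..n. of_bool (odd (i + j + n))
            * (Tminus (posP n) (i, j) I + Tplus (posP n) (i, j) I))
       = 1 - odd_rise I i - odd_rise I (i - 1)"
proof -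
  have "row_len I (i - 1) < i"
    using row_len_le[OF I, of "i - 1"] i by simp
  moreover have "row_len I i \<le> row_len I (i - 1) + 1"
    using row_len_Suc_le[OF I, of "i - 1"] i by simp
  moreover note row_len_le[OF I, of i] row_len_Suc_le[OF I, of i]
  ultimately have "of_bool (row_len I (Suc i) \<le> row_len I i \<and> odd (row_len I i))
      + of_bool (row_len I i < i \<and> (row_len I i = 0 \<or> row_len I i \<le> row_len I (i - 1))
                 \<and> even (row_len I i))
      = 1 - odd_rise I i - odd_rise I (i - 1)"
    using i by (simp add: row_boundary_indicators odd_rise_def)
  then show ?thesis
    by (simp only: distrib_left sum.distrib row_sum_Tminus_posP[OF I i] row_sum_Tplus_posP[OF I i])
qed

lemma alternating_sum_telescope:
  fixes h :: "nat \<Rightarrow> 'a::comm_ring_1"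
  assumes "h 0 = 0"
  shows "(\<Sum>i=1..m. (-1) ^ (i - 1) * (1 - h i - h (i - 1))) = of_bool (odd m) - (-1) ^ (m - 1) * h m"
proof (induction m)
  case 0
  then show ?case using assms by simp
next
  case (Suc m)
  then show ?case
    using assms by (cases m) (auto simp: algebra_simps)
qed

lemma sum_checker_sign_boundary:
  assumes I: "I \<in> order_ideals (posP n)"
  shows "(\<Sum>p\<in>posP n. checker_sign n p * (Tminus (posP n) p I + Tplus (posP n) p I))
       = of_bool (odd n)"
proof -
  have "(\<Sum>p\<in>posP n. checker_sign n p * (Tminus (posP n) p I + Tplus (posP n) p I))
      = (\<Sum>i=1..n. (-1) ^ (i - 1) * (\<Sum>j=n + 1 - i..n. of_bool (odd (i + j + n))
            * (Tminus (posP n) (i, j) I + Tplus (posP n) (i, j) I)))"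
    unfolding sum_posP_rows sum_distrib_left by (intro sum.cong refl) (simp add: checker_sign_def)
  also have "\<dots> = (\<Sum>i=1..n. (-1) ^ (i - 1) * (1 - odd_rise I i - odd_rise I (i - 1)))"
    by (intro sum.cong refl, subst row_sum_boundary_posP[OF I]) auto
  also have "\<dots> = of_bool (odd n) - (-1) ^ (n - 1) * odd_rise I n"
    by (rule alternating_sum_telescope) (simp add: odd_rise_def row_len_eq_0[OF I])
  also have "odd_rise I n = 0"
    by (simp add: odd_rise_def row_len_eq_0[OF I])
  finally show ?thesis by simp
qed

lemma qv_add_one_neq_zero: "qv + 1 \<noteq> (0 :: ratfun)"
proof
  assume "qv + 1 = (0 :: ratfun)"
  then have "Fract ([:0, 1:] + 1) 1 = (Fract 0 1 :: ratfun)"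
    by (simp add: qv_def One_fract_def Zero_fract_def)
  then have "[:0, 1:] + 1 = (0 :: real poly)" by (simp add: eq_fract)
  then have "coeff ([:0, 1:] + 1) 1 = coeff (0 :: real poly) 1" by simp
  then show False by simp
qed

theorem theorem5p17:
  fixes n :: nat
  assumes "1 \<le> n"
  shows "qequiv (posP n)
           (\<lambda>I. (1/2) * (\<Sum>i = 1..n. (-1) ^ (i - 1) * Rbar n i I))
           (\<lambda>I. if even n then 0 else 1 / (qv + 1))"
  unfolding qequiv_def
proof (intro exI[of _ "\<lambda>p. - checker_sign n p / (qv + 1)"] ballI)
  fix I assume I: "I \<in> order_ideals (posP n)"
  define A where "A = (\<Sum>p\<in>posP n. checker_sign n p * Tminus (posP n) p I)"
  define B where "B = (\<Sum>p\<in>posP n. checker_sign n p * Tplus (posP n) p I)"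
  have lhs: "(1/2) * (\<Sum>i = 1..n. (-1) ^ (i - 1) * Rbar n i I) = A"
    unfolding alternating_sum_Rbar A_def by simp
  have "A + B = of_bool (odd n)"
    using sum_checker_sign_boundary[OF I] by (simp add: A_def B_def distrib_left sum.distrib)
  then have numerator: "qv * A - B = (qv + 1) * A - of_bool (odd n)"
    by (simp add: algebra_simps)
  have "(\<Sum>p\<in>posP n. - checker_sign n p / (qv + 1) * Tq (posP n) p I)
      = (\<Sum>p\<in>posP n. (qv * (checker_sign n p * Tminus (posP n) p I)
                         - checker_sign n p * Tplus (posP n) p I) / (qv + 1))"
    by (intro sum.cong refl) (simp add: Tq_def field_simps qv_add_one_neq_zero)
  also have "\<dots> = (qv * A - B) / (qv + 1)"
    by (simp add: A_def B_def sum_divide_distrib[symmetric] sum_subtractf sum_distrib_left)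
  also have "\<dots> = A - (if even n then 0 else 1 / (qv + 1))"
    unfolding numerator using qv_add_one_neq_zero by (simp add: diff_divide_distrib)
  finally show "(1/2) * (\<Sum>i = 1..n. (-1) ^ (i - 1) * Rbar n i I)
      - (if even n then 0 else 1 / (qv + 1))
      = (\<Sum>p\<in>posP n. - checker_sign n p / (qv + 1) * Tq (posP n) p I)"
    unfolding lhs by simp
qed

end
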